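(* Let $a\in A^\pm_{p|q}$ be homogeneous of degree $g\in\mathbb{Z}^n$ with respect to the $\mathbb{Z}^n$-grading. If $a^\ast a=0$, then $a=0$.
   Context: $\Bbbk$ is an algebraically closed field of characteristic $0$. Fix integers $p,q\ge 0$, put $n=p+q$, and fix a sign $\pm\in\{+,-\}$. Set $p(i)=0$ for $1\le i\le p$ and $p(i)=1$ for $p<i\le n$. The Clifford/Weyl superalgebra $A^\pm_{p|q}$ is the associative unital superalgebra over $\Bbbk$ generated by $x_i,\partial_i$ ($1\le i\le n$), where $x_i,\partial_i$ have parity $p(i)$, subject to the relations $[\partial_i,x_j]_\pm=\delta_{ij}$, $[x_i,x_j]_\pm=0$, $[\partial_i,\partial_j]_\pm=0$ for all $i,j$, where for homogeneous $a,b$ one sets $[a,b]_\pm=ab\pm(-1)^{p(a)p(b)}ba$. $A^\pm_{p|q}$ is $\mathbb{Z}^n$-graded by $\deg x_i=\mathbf{e}_i$, $\deg\partial_i=-\mathbf{e}_i$. The map $\ast$ is the unique $\Bbbk$-linear map $A^\pm_{p|q}\to A^\pm_{p|q}$ with $(ab)^\ast=b^\ast a^\ast$, $(a^\ast)^\ast=a$, $x_i^\ast=\partial_i$, $\partial_i^\ast=x_i$. *)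

theory Defs
  imports "HOL-Computational_Algebra.Polynomial"
begin

text \<open>Generators x_i (X i) and partial_i (D i), indices 1..n.
 The free associative algebra k<gens> is modelled by coefficient functions
 on words (lists of generators); elements of the free algebra are those with
 finite support.\<close>

datatype gen = X nat | D nat

type_synonym 'k fa = "gen list \<Rightarrow> 'k"

definition alg_closed :: "'k::field itself \<Rightarrow> bool" where
  "alg_closed _ \<longleftrightarrow> (\<forall>P::'k poly. degree P > 0 \<longrightarrow> (\<exists>z. poly P z = 0))"

definition fa_finite :: "'k::zero fa \<Rightarrow> bool" where
  "fa_finite f \<longleftrightarrow> finite {w. f w \<noteq> 0}"

definition fa_mult :: "'k::comm_ring_1 fa \<Rightarrow> 'k fa \<Rightarrow> 'k fa" where
  "fa_mult f g = (\<lambda>w. \<Sum>k\<le>length w. f (take k w) * g (drop k w))"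

definition fa_mono :: "gen list \<Rightarrow> 'k::comm_ring_1 fa" where
  "fa_mono u = (\<lambda>w. if w = u then 1 else 0)"

definition fa_add :: "'k::comm_ring_1 fa \<Rightarrow> 'k fa \<Rightarrow> 'k fa" where
  "fa_add f g = (\<lambda>w. f w + g w)"

definition fa_smult :: "'k::comm_ring_1 \<Rightarrow> 'k fa \<Rightarrow> 'k fa" where
  "fa_smult c f = (\<lambda>w. c * f w)"

definition fa_diff :: "'k::comm_ring_1 fa \<Rightarrow> 'k fa \<Rightarrow> 'k fa" where
  "fa_diff f g = (\<lambda>w. f w - g w)"

definition par :: "nat \<Rightarrow> nat \<Rightarrow> nat" where
  "par p i = (if i \<le> p then 0 else 1)"

text \<open>Sign in the bracket [a,b]_\<pm> = ab \<pm> (-1)^(p(a)p(b)) ba; pl = True means +.\<close>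
definition brsign :: "bool \<Rightarrow> nat \<Rightarrow> nat \<Rightarrow> nat \<Rightarrow> 'k::comm_ring_1" where
  "brsign pl p i j = (if pl then 1 else -1) * (-1) ^ (par p i * par p j)"

definition bracket :: "bool \<Rightarrow> nat \<Rightarrow> gen \<Rightarrow> nat \<Rightarrow> gen \<Rightarrow> nat \<Rightarrow> 'k::comm_ring_1 fa" where
  "bracket pl p a i b j =
     fa_add (fa_mono [a, b]) (fa_smult (brsign pl p i j) (fa_mono [b, a]))"

text \<open>Defining relations of A^\<pm>_{p|q} (n = p+q), as elements of the free algebra.\<close>
inductive_set rels :: "bool \<Rightarrow> nat \<Rightarrow> nat \<Rightarrow> 'k::comm_ring_1 fa set"
  for pl :: bool and p :: nat and q :: nat where
  rel_DX: "\<lbrakk>1 \<le> i; i \<le> p + q; 1 \<le> j; j \<le> p + q\<rbrakk> \<Longrightarrow>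
     fa_diff (bracket pl p (D i) i (X j) j) (fa_smult (if i = j then 1 else 0) (fa_mono [])) \<in> rels pl p q"
| rel_XX: "\<lbrakk>1 \<le> i; i \<le> p + q; 1 \<le> j; j \<le> p + q\<rbrakk> \<Longrightarrow>
     bracket pl p (X i) i (X j) j \<in> rels pl p q"
| rel_DD: "\<lbrakk>1 \<le> i; i \<le> p + q; 1 \<le> j; j \<le> p + q\<rbrakk> \<Longrightarrow>
     bracket pl p (D i) i (D j) j \<in> rels pl p q"

inductive_set rel_ideal :: "bool \<Rightarrow> nat \<Rightarrow> nat \<Rightarrow> 'k::comm_ring_1 fa set"
  for pl :: bool and p :: nat and q :: nat where
  ideal_zero: "(\<lambda>_. 0) \<in> rel_ideal pl p q"
| ideal_gen: "r \<in> rels pl p q \<Longrightarrow>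
     fa_smult c (fa_mult (fa_mult (fa_mono u) r) (fa_mono v)) \<in> rel_ideal pl p q"
| ideal_add: "\<lbrakk>f \<in> rel_ideal pl p q; g \<in> rel_ideal pl p q\<rbrakk> \<Longrightarrow> fa_add f g \<in> rel_ideal pl p q"

definition gen_idx :: "gen \<Rightarrow> nat" where
  "gen_idx a = (case a of X i \<Rightarrow> i | D i \<Rightarrow> i)"

definition fa_in_range :: "nat \<Rightarrow> 'k::zero fa \<Rightarrow> bool" where
  "fa_in_range n f \<longleftrightarrow> (\<forall>w. f w \<noteq> 0 \<longrightarrow> (\<forall>a\<in>set w. 1 \<le> gen_idx a \<and> gen_idx a \<le> n))"

definition word_deg :: "gen list \<Rightarrow> nat \<Rightarrow> int" where
  "word_deg w i = int (length (filter (\<lambda>a. a = X i) w)) - int (length (filter (\<lambda>a. a = D i) w))"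

definition fa_homog :: "(nat \<Rightarrow> int) \<Rightarrow> 'k::zero fa \<Rightarrow> bool" where
  "fa_homog g f \<longleftrightarrow> (\<forall>w. f w \<noteq> 0 \<longrightarrow> word_deg w = g)"

fun gswap :: "gen \<Rightarrow> gen" where
  "gswap (X i) = D i"
| "gswap (D i) = X i"

definition fa_star :: "'k fa \<Rightarrow> 'k fa" where
  "fa_star f = (\<lambda>w. f (rev (map gswap w)))"

end

theory Submission
  imports Defs "HOL-Library.Function_Algebras" "HOL-Library.Multiset" "HOL-Library.Product_Lexorder"
begin

(* A acts on its Fock module, spanned by vectors e_\<alpha> indexed by occupation vectors \<alpha>.
   For the bilinear form in which e_\<alpha> has norm N(\<alpha>) = \<Prod>_j \<alpha>_j! the operator \<partial>_i is
   adjoint to x_i, so for a homogeneous of degree g the coefficient of e_\<gamma> in a^* a e_\<gamma> is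
   N(\<gamma>+g)/N(\<gamma>) times the square of the coefficient of e_{\<gamma>+g} in a e_\<gamma>.  If a^* a lies
   in the ideal it acts by zero, so (in characteristic 0) a acts by zero as well.  On the
   other hand the normal-ordered (PBW) words span A modulo the relations and act linearly
   independently on the Fock module, so an element acting by zero lies in the ideal. *)

definition unit_deg :: "nat \<Rightarrow> nat \<Rightarrow> int" where
  "unit_deg i = (\<lambda>j. if j = i then 1 else 0)"

fun gen_deg :: "gen \<Rightarrow> nat \<Rightarrow> int" where
  "gen_deg (X i) = unit_deg i"
| "gen_deg (D i) = - unit_deg i"

lemma unit_deg_apply [simp]: "unit_deg i j = (if j = i then 1 else 0)"
  by (simp add: unit_deg_def)

lemma add_unit_deg [simp]: "\<alpha> + unit_deg i = \<alpha>(i := \<alpha> i + 1)"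
  and diff_unit_deg [simp]: "\<alpha> - unit_deg i = \<alpha>(i := \<alpha> i - 1)"
  and add_uminus_unit_deg [simp]: "\<alpha> + - unit_deg i = \<alpha>(i := \<alpha> i - 1)"
  by (simp_all add: fun_eq_iff)

lemma word_deg_Nil [simp]: "word_deg [] = 0"
  by (simp add: word_deg_def fun_eq_iff)

lemma word_deg_Cons [simp]: "word_deg (a # w) = gen_deg a + word_deg w"
  by (cases a) (auto simp: word_deg_def fun_eq_iff)

lemma word_deg_append [simp]: "word_deg (u @ v) = word_deg u + word_deg v"
  by (induction u) (simp_all add: add.assoc)

section \<open>The free algebra\<close>

lemma fa_finite_add: "fa_finite f \<Longrightarrow> fa_finite g \<Longrightarrow> fa_finite (fa_add f g)"
  unfolding fa_finite_def fa_add_def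
  by (rule finite_subset[of _ "{w. f w \<noteq> 0} \<union> {w. g w \<noteq> 0}"]) auto

lemma fa_finite_diff: "fa_finite f \<Longrightarrow> fa_finite g \<Longrightarrow> fa_finite (fa_diff f g)"
  unfolding fa_finite_def fa_diff_def
  by (rule finite_subset[of _ "{w. f w \<noteq> 0} \<union> {w. g w \<noteq> 0}"]) auto

lemma fa_finite_smult: "fa_finite f \<Longrightarrow> fa_finite (fa_smult c f)"
  unfolding fa_finite_def fa_smult_def
  by (rule finite_subset[of _ "{w. f w \<noteq> 0}"]) auto

lemma fa_finite_mono: "fa_finite (fa_mono u :: 'k::comm_ring_1 fa)"
  unfolding fa_finite_def fa_mono_def
  by (rule finite_subset[of _ "{u}"]) auto

lemma fa_finite_zero: "fa_finite (\<lambda>_. 0)"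
  unfolding fa_finite_def by simp

lemma fa_mult_mono_left:
  "fa_mult (fa_mono u) f w = (if \<exists>w'. w = u @ w' then f (drop (length u) w) else (0::'k::comm_ring_1))"
proof -
  have "fa_mult (fa_mono u) f w =
      (\<Sum>k\<le>length w. if k = length u then (if take (length u) w = u then f (drop (length u) w) else 0) else 0)"
    unfolding fa_mult_def fa_mono_def by (rule sum.cong) auto
  also have "\<dots> = (if length u \<le> length w \<and> take (length u) w = u then f (drop (length u) w) else 0)"
    by (simp add: sum.delta)
  also have "(length u \<le> length w \<and> take (length u) w = u) = (\<exists>w'. w = u @ w')"
  proof
    assume "length u \<le> length w \<and> take (length u) w = u"
    then show "\<exists>w'. w = u @ w'" by (metis append_take_drop_id)
  qed auto
  finally show ?thesis .
qed

lemma fa_mult_mono_right: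
  "fa_mult f (fa_mono v) w =
     (if \<exists>w'. w = w' @ v then f (take (length w - length v) w) else (0::'k::comm_ring_1))"
proof -
  have "fa_mult f (fa_mono v) w =
      (\<Sum>k\<le>length w. if k = length w - length v then (if length v \<le> length w \<and> drop (length w - length v) w = v
         then f (take (length w - length v) w) else 0) else 0)"
    unfolding fa_mult_def fa_mono_def by (rule sum.cong) auto
  also have "\<dots> = (if length v \<le> length w \<and> drop (length w - length v) w = v
      then f (take (length w - length v) w) else 0)"
    by (simp add: sum.delta)
  also have "(length v \<le> length w \<and> drop (length w - length v) w = v) = (\<exists>w'. w = w' @ v)"
  proof
    assume "length v \<le> length w \<and> drop (length w - length v) w = v"
    then show "\<exists>w'. w = w' @ v" by (metis append_take_drop_id)
  qed auto
  finally show ?thesis .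
qed

definition sandwich :: "gen list \<Rightarrow> 'k::comm_ring_1 fa \<Rightarrow> gen list \<Rightarrow> 'k fa" where
  "sandwich u f v = fa_mult (fa_mult (fa_mono u) f) (fa_mono v)"

lemma sandwich_apply:
  "sandwich u f v w = (if \<exists>m. w = u @ m @ v then f (SOME m. w = u @ m @ v) else 0)"
proof (cases "\<exists>m. w = u @ m @ v")
  case True
  then obtain m where w: "w = u @ m @ v" by blast
  have "(SOME m. w = u @ m @ v) = m"
    by (rule some_equality) (simp_all add: w)
  then show ?thesis
    using w by (simp add: sandwich_def fa_mult_mono_left fa_mult_mono_right)
qed (auto simp: sandwich_def fa_mult_mono_left fa_mult_mono_right)

lemma sandwich_apply_append [simp]: "sandwich u f v (u @ m @ v) = f m"
  by (simp add: sandwich_apply)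

lemma sandwich_support: "{w. sandwich u f v w \<noteq> 0} = (\<lambda>m. u @ m @ v) ` {m. f m \<noteq> 0}"
  by (force simp: sandwich_apply split: if_splits)

lemma fa_finite_sandwich: "fa_finite f \<Longrightarrow> fa_finite (sandwich u f v)"
  unfolding fa_finite_def sandwich_support by simp

lemma sandwich_add: "sandwich u (fa_add f g) v = fa_add (sandwich u f v) (sandwich u g v)"
  and sandwich_diff: "sandwich u (fa_diff f g) v = fa_diff (sandwich u f v) (sandwich u g v)"
  and sandwich_smult: "sandwich u (fa_smult c f) v = fa_smult c (sandwich u f v)"
  by (simp_all add: fun_eq_iff sandwich_apply fa_add_def fa_diff_def fa_smult_def)

lemma sandwich_mono: "sandwich u (fa_mono m) v = (fa_mono (u @ m @ v) :: 'k::comm_ring_1 fa)"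
  by (auto simp: fun_eq_iff sandwich_apply fa_mono_def)

lemma fa_homog_sandwich:
  "fa_homog d f \<Longrightarrow> fa_homog (word_deg u + d + word_deg v) (sandwich u f v)"
  by (auto simp: fa_homog_def sandwich_apply add_ac split: if_splits)

lemma fa_mult_pair_sum:
  fixes f h :: "'k::comm_ring_1 fa"
  assumes "finite P" and "{x. f x \<noteq> 0} \<times> {y. h y \<noteq> 0} \<subseteq> P"
  shows "fa_mult f h w = (\<Sum>(x, y)\<in>{(x, y)\<in>P. x @ y = w}. f x * h y)"
proof -
  let ?S = "{(x, y). x @ y = w}"
  have splits: "?S = (\<lambda>k. (take k w, drop k w)) ` {..length w}"
  proof (rule set_eqI, rule iffI)
    fix z assume "z \<in> ?S"
    then obtain x y where "z = (x, y)" "x @ y = w" by auto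
    then show "z \<in> (\<lambda>k. (take k w, drop k w)) ` {..length w}"
      by (intro image_eqI[of _ _ "length x"]) auto
  qed auto
  have "inj_on (\<lambda>k. (take k w, drop k w)) {..length w}"
    by (rule inj_onI) (metis atMost_iff length_take min.absorb2 prod.inject)
  then have "fa_mult f h w = (\<Sum>(x, y)\<in>?S. f x * h y)"
    unfolding fa_mult_def splits by (simp add: sum.reindex)
  also have "\<dots> = (\<Sum>(x, y)\<in>?S \<inter> P. f x * h y)"
    by (rule sum.mono_neutral_right) (use assms in \<open>auto simp: splits\<close>)
  also have "?S \<inter> P = {(x, y)\<in>P. x @ y = w}" by auto
  finally show ?thesis .
qed

lemma fa_mult_nonzeroD:
  fixes f h :: "'k::comm_ring_1 fa"
  assumes "fa_finite f" "fa_finite h" "fa_mult f h w \<noteq> 0"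
  obtains x y where "f x \<noteq> 0" "h y \<noteq> 0" "w = x @ y"
proof -
  let ?P = "{x. f x \<noteq> 0} \<times> {y. h y \<noteq> 0}"
  have "finite ?P" using assms(1,2) by (simp add: fa_finite_def)
  then have "fa_mult f h w = (\<Sum>(x, y)\<in>{(x, y)\<in>?P. x @ y = w}. f x * h y)"
    by (rule fa_mult_pair_sum) simp
  with assms(3) have "{(x, y)\<in>?P. x @ y = w} \<noteq> {}"
    by (metis (no_types, lifting) sum.empty)
  then show thesis using that by auto
qed

lemma fa_homog_mult:
  fixes f h :: "'k::comm_ring_1 fa"
  assumes "fa_finite f" "fa_finite h" "fa_homog d f" "fa_homog e h"
  shows "fa_homog (d + e) (fa_mult f h)"
  unfolding fa_homog_def
proof (intro allI impI)
  fix w assume "fa_mult f h w \<noteq> 0"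
  with assms(1,2) obtain x y where "f x \<noteq> 0" "h y \<noteq> 0" "w = x @ y"
    by (rule fa_mult_nonzeroD)
  with assms(3,4) show "word_deg w = d + e" by (simp add: fa_homog_def)
qed

definition deg_part :: "(nat \<Rightarrow> int) \<Rightarrow> 'k::zero fa \<Rightarrow> 'k fa" where
  "deg_part d f = (\<lambda>w. if word_deg w = d then f w else 0)"

lemma fa_finite_deg_part: "fa_finite f \<Longrightarrow> fa_finite (deg_part d f)"
  unfolding fa_finite_def deg_part_def
  by (rule finite_subset[of _ "{w. f w \<noteq> 0}"]) auto

lemma deg_part_homog: "fa_homog d f \<Longrightarrow> deg_part d f = f"
  by (auto simp: fa_homog_def deg_part_def fun_eq_iff)

lemma deg_part_add: "deg_part d (fa_add f g) = fa_add (deg_part d f) (deg_part d g)"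
  by (auto simp: deg_part_def fa_add_def fun_eq_iff)

lemma fa_homog_mono: "fa_homog (word_deg u) (fa_mono u)"
  by (simp add: fa_homog_def fa_mono_def)

lemma fa_homog_add: "fa_homog d f \<Longrightarrow> fa_homog d g \<Longrightarrow> fa_homog d (fa_add f g)"
  unfolding fa_homog_def fa_add_def by (metis add.left_neutral)

lemma fa_homog_diff: "fa_homog d f \<Longrightarrow> fa_homog d g \<Longrightarrow> fa_homog d (fa_diff f g)"
  unfolding fa_homog_def fa_diff_def by (metis diff_self)

lemma fa_homog_smult: "fa_homog d f \<Longrightarrow> fa_homog d (fa_smult c f)"
  unfolding fa_homog_def fa_smult_def by (metis mult_zero_right)

lemma fa_homog_bracket: "fa_homog (word_deg [a, b]) (bracket pl p a i b j)"
proof -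
  have "word_deg [b, a] = word_deg [a, b]"
    by (simp add: add.commute)
  then show ?thesis
    unfolding bracket_def by (metis fa_homog_add fa_homog_mono fa_homog_smult)
qed

lemma gswap_gswap [simp]: "gswap (gswap a) = a"
  by (cases a) auto

lemma gen_deg_gswap [simp]: "gen_deg (gswap a) = - gen_deg a"
  by (cases a) auto

definition star_word :: "gen list \<Rightarrow> gen list" where
  "star_word w = rev (map gswap w)"

lemma star_word_star_word [simp]: "star_word (star_word w) = w"
  by (simp add: star_word_def rev_map comp_def)

lemma star_word_Cons: "star_word (a # w) = star_word w @ [gswap a]"
  by (simp add: star_word_def)

lemma word_deg_star_word [simp]: "word_deg (star_word w) = - word_deg w"
  by (induction w) (auto simp: star_word_def)

lemma fa_star_apply: "fa_star f w = f (star_word w)"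
  by (simp add: fa_star_def star_word_def)

lemma fa_star_support: "{w. fa_star f w \<noteq> 0} = star_word ` {w. f w \<noteq> 0}"
  by (auto simp: fa_star_apply image_iff) (metis star_word_star_word)

lemma fa_finite_star: "fa_finite f \<Longrightarrow> fa_finite (fa_star f)"
  unfolding fa_finite_def fa_star_support by simp

lemma fa_homog_star: "fa_homog d f \<Longrightarrow> fa_homog (- d) (fa_star f)"
  unfolding fa_homog_def fa_star_apply by (metis minus_minus word_deg_star_word)

section \<open>The ideal of relations\<close>

lemma rel_ideal_smult: "f \<in> rel_ideal pl p q \<Longrightarrow> fa_smult c f \<in> rel_ideal pl p q"
proof (induction rule: rel_ideal.induct)
  case ideal_zero
  then show ?case
    using rel_ideal.ideal_zero by (simp add: fa_smult_def)
next
  case (ideal_gen r c' u v)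
  then show ?case
    using rel_ideal.ideal_gen[OF ideal_gen, of "c * c'"] by (simp add: fa_smult_def mult.assoc)
next
  case (ideal_add f g)
  have "fa_smult c (fa_add f g) = fa_add (fa_smult c f) (fa_smult c g)"
    by (simp add: fa_smult_def fa_add_def distrib_left)
  then show ?case using rel_ideal.ideal_add[OF ideal_add.IH] by simp
qed

lemma sandwich_rels_in_rel_ideal: "r \<in> rels pl p q \<Longrightarrow> sandwich u r v \<in> rel_ideal pl p q"
  using rel_ideal.ideal_gen[of r pl p q 1 u v] by (simp add: sandwich_def fa_smult_def)

lemma sandwich_bracket:
  "sandwich u (bracket pl p a i b j) v =
     fa_add (fa_mono (u @ [a, b] @ v)) (fa_smult (brsign pl p i j) (fa_mono (u @ [b, a] @ v)))"
  unfolding bracket_def by (simp add: sandwich_add sandwich_smult sandwich_mono)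

lemma swap_XX_in_rel_ideal:
  assumes "1 \<le> i" "i \<le> p + q" "1 \<le> j" "j \<le> p + q"
  shows "fa_add (fa_mono (u @ [X i, X j] @ v)) (fa_smult (brsign pl p i j) (fa_mono (u @ [X j, X i] @ v)))
    \<in> rel_ideal pl p q"
  using sandwich_rels_in_rel_ideal[OF rels.rel_XX[OF assms, where pl = pl], where u = u and v = v] by (simp add: sandwich_bracket)

lemma swap_DD_in_rel_ideal:
  assumes "1 \<le> i" "i \<le> p + q" "1 \<le> j" "j \<le> p + q"
  shows "fa_add (fa_mono (u @ [D i, D j] @ v)) (fa_smult (brsign pl p i j) (fa_mono (u @ [D j, D i] @ v)))
    \<in> rel_ideal pl p q"
  using sandwich_rels_in_rel_ideal[OF rels.rel_DD[OF assms, where pl = pl], where u = u and v = v] by (simp add: sandwich_bracket)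

lemma swap_DX_in_rel_ideal:
  assumes "1 \<le> i" "i \<le> p + q" "1 \<le> j" "j \<le> p + q"
  shows "fa_diff (fa_add (fa_mono (u @ [D i, X j] @ v)) (fa_smult (brsign pl p i j) (fa_mono (u @ [X j, D i] @ v))))
      (fa_smult (if i = j then 1 else 0) (fa_mono (u @ v))) \<in> rel_ideal pl p q"
  using sandwich_rels_in_rel_ideal[OF rels.rel_DX[OF assms, where pl = pl], where u = u and v = v]
  by (simp add: sandwich_bracket sandwich_diff sandwich_smult sandwich_mono)

lemma fa_finite_bracket: "fa_finite (bracket pl p a i b j :: 'k::comm_ring_1 fa)"
  unfolding bracket_def by (intro fa_finite_add fa_finite_smult fa_finite_mono)

lemma rels_fa_finite: "r \<in> rels pl p q \<Longrightarrow> fa_finite r"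
  by (induction rule: rels.induct) (simp_all add: fa_finite_bracket fa_finite_diff fa_finite_smult fa_finite_mono)

lemma rels_homog: "r \<in> rels pl p q \<Longrightarrow> \<exists>d. fa_homog d r"
proof (induction rule: rels.induct)
  case (rel_DX i j)
  have "fa_homog (word_deg [D i, X j]) (fa_smult (if i = j then 1 else 0) (fa_mono []))"
    by (auto simp: fa_homog_def fa_smult_def fa_mono_def)
  then show ?case by (blast intro: fa_homog_diff fa_homog_bracket)
qed (blast intro: fa_homog_bracket)+

section \<open>The Fock representation\<close>

context
  fixes pl :: bool and p :: nat
begin

definition fermionic :: "nat \<Rightarrow> bool" where
  "fermionic j \<longleftrightarrow> (pl = (par p j = 0))"

lemma brsign_square: "brsign pl p i j * brsign pl p i j = (1::'k::comm_ring_1)"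
  by (simp add: brsign_def power_mult_distrib[symmetric] flip: power_add)

lemma brsign_square_left: "brsign pl p i j * (brsign pl p i j * x) = (x::'k::comm_ring_1)"
  by (simp add: mult.assoc[symmetric] brsign_square)

lemma brsign_commute: "brsign pl p i j = brsign pl p j i"
  by (simp add: brsign_def mult.commute)

lemma brsign_diag: "brsign pl p i i = (if fermionic i then 1 else -1)"
  by (auto simp: brsign_def fermionic_def par_def)

(* The Fock module has basis e_\<alpha>, \<alpha> ranging over occupation vectors: finitely supported,
   nonnegative, and at most 1 at the fermionic indices j (those with x_j^2 = 0 in A).
   word_coeff w \<alpha> is the scalar c with w e_\<alpha> = c e_{\<alpha> + word_deg w}; it is 0 as soon as an
   intermediate index leaves the occupation vectors. *)
definition occupation :: "(nat \<Rightarrow> int) \<Rightarrow> bool" where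
  "occupation \<alpha> \<longleftrightarrow> (\<forall>j. 0 \<le> \<alpha> j) \<and> (\<forall>j. fermionic j \<longrightarrow> \<alpha> j \<le> 1) \<and> finite {j. \<alpha> j \<noteq> 0}"

definition fock_sign :: "nat \<Rightarrow> (nat \<Rightarrow> int) \<Rightarrow> 'k::comm_ring_1" where
  "fock_sign i \<alpha> = (\<Prod>j<i. (- brsign pl p i j) ^ nat (\<alpha> j))"

fun gen_coeff :: "gen \<Rightarrow> (nat \<Rightarrow> int) \<Rightarrow> 'k::comm_ring_1" where
  "gen_coeff (X i) \<alpha> =
     (if occupation \<alpha> \<and> occupation (\<alpha> + unit_deg i) then fock_sign i \<alpha> else 0)"
| "gen_coeff (D i) \<alpha> =
     (if occupation \<alpha> \<and> occupation (\<alpha> - unit_deg i) then of_int (\<alpha> i) * fock_sign i \<alpha> else 0)"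

fun word_coeff :: "gen list \<Rightarrow> (nat \<Rightarrow> int) \<Rightarrow> 'k::comm_ring_1" where
  "word_coeff [] \<alpha> = (if occupation \<alpha> then 1 else 0)"
| "word_coeff (a # w) \<alpha> = gen_coeff a (\<alpha> + word_deg w) * word_coeff w \<alpha>"

lemma occupation_nonneg: "occupation \<alpha> \<Longrightarrow> 0 \<le> \<alpha> j"
  and occupation_fermionic: "occupation \<alpha> \<Longrightarrow> fermionic j \<Longrightarrow> \<alpha> j \<le> 1"
  by (simp_all add: occupation_def)

lemma occupation_upd:
  assumes "occupation \<alpha>"
  shows "occupation (\<alpha>(i := c)) \<longleftrightarrow> 0 \<le> c \<and> (fermionic i \<longrightarrow> c \<le> 1)"
proof -
  have "{j. (\<alpha>(i := c)) j \<noteq> 0} \<subseteq> insert i {j. \<alpha> j \<noteq> 0}" by auto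
  then have "finite {j. (\<alpha>(i := c)) j \<noteq> 0}"
    using assms finite_subset unfolding occupation_def by blast
  then show ?thesis using assms unfolding occupation_def by auto
qed

lemma gen_coeff_nonzeroD:
  "gen_coeff a \<alpha> \<noteq> 0 \<Longrightarrow> occupation \<alpha> \<and> occupation (\<alpha> + gen_deg a)"
  by (cases a) (auto split: if_splits)

lemma word_coeff_nonzeroD:
  "word_coeff w \<alpha> \<noteq> (0::'k::comm_ring_1) \<Longrightarrow> occupation \<alpha> \<and> occupation (\<alpha> + word_deg w)"
proof (induction w)
  case (Cons a w)
  then have "gen_coeff a (\<alpha> + word_deg w) \<noteq> (0::'k)" and "word_coeff w \<alpha> \<noteq> (0::'k)"
    by (auto simp del: gen_coeff.simps)
  then show ?case
    using Cons.IH gen_coeff_nonzeroD[of a "\<alpha> + word_deg w"] by (simp add: add_ac plus_fun_def)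
qed (auto split: if_splits)

lemma word_coeff_append:
  "word_coeff (u @ v) \<alpha> = word_coeff u (\<alpha> + word_deg v) * (word_coeff v \<alpha> :: 'k::comm_ring_1)"
proof (induction u)
  case Nil
  show ?case
  proof (cases "word_coeff v \<alpha> = (0::'k)")
    case False
    then show ?thesis using word_coeff_nonzeroD[OF False] by (simp add: plus_fun_def)
  qed simp
qed (simp add: add_ac plus_fun_def)

lemma word_coeff_single: "word_coeff [a] \<alpha> = gen_coeff a \<alpha>"
  by (cases a) simp_all

lemma fock_sign_square: "fock_sign i \<alpha> * fock_sign i \<alpha> = (1::'k::comm_ring_1)"
  unfolding fock_sign_def prod.distrib[symmetric] power_mult_distrib[symmetric]
  by (rule prod.neutral) (simp add: brsign_square)

lemma fock_sign_square_left: "fock_sign i \<alpha> * (fock_sign i \<alpha> * x) = (x::'k::comm_ring_1)"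
  by (simp add: mult.assoc[symmetric] fock_sign_square)

lemma fock_sign_upd_self: "fock_sign i (\<alpha>(i := c)) = fock_sign i \<alpha>"
  unfolding fock_sign_def by (auto intro!: prod.cong)

lemma fock_sign_Suc:
  assumes "0 \<le> \<alpha> j"
  shows "fock_sign i (\<alpha>(j := \<alpha> j + 1)) =
    (if j < i then - brsign pl p i j else 1) * fock_sign i \<alpha>"
proof (cases "j < i")
  case True
  let ?f = "\<lambda>j'. (- brsign pl p i j') ^ nat (\<alpha> j')"
  have "nat (\<alpha> j + 1) = Suc (nat (\<alpha> j))" using assms by simp
  then have "fock_sign i (\<alpha>(j := \<alpha> j + 1)) = - brsign pl p i j * ?f j * prod ?f ({..<i} - {j})"
    unfolding fock_sign_def using True
    by (simp add: prod.remove[of _ j] mult.assoc del: fun_upd_apply)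
       (auto intro!: prod.cong)
  also have "\<dots> = - brsign pl p i j * fock_sign i \<alpha>"
    unfolding fock_sign_def using True by (simp add: prod.remove[of _ j] mult.assoc)
  finally show ?thesis using True by simp
qed (auto simp: fock_sign_def intro!: prod.cong)

lemma fock_sign_pred:
  assumes "1 \<le> \<alpha> j"
  shows "fock_sign i (\<alpha>(j := \<alpha> j - 1)) =
    (if j < i then - brsign pl p i j else 1) * (fock_sign i \<alpha> :: 'k::comm_ring_1)"
proof -
  let ?\<beta> = "\<alpha>(j := \<alpha> j - 1)" and ?s = "if j < i then - brsign pl p i j else (1::'k)"
  have "fock_sign i \<alpha> = ?s * fock_sign i ?\<beta>"
    using fock_sign_Suc[of ?\<beta> j i] assms by simp
  then show ?thesis by (simp add: brsign_square mult.assoc[symmetric])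
qed

lemma word_coeff_non_occupation: "\<not> occupation \<gamma> \<Longrightarrow> word_coeff w \<gamma> = (0::'k::comm_ring_1)"
  using word_coeff_nonzeroD by blast

lemma occupation_cases:
  assumes "occupation \<gamma>"
  obtains "\<gamma> j = 0" | "\<gamma> j = 1" | "2 \<le> \<gamma> j" "\<not> fermionic j"
  using occupation_nonneg[OF assms, of j] occupation_fermionic[OF assms, of j] by force

lemmas fock_simps = occupation_upd fock_sign_Suc fock_sign_pred fock_sign_upd_self
  brsign_commute brsign_diag fock_sign_square brsign_square

lemma word_coeff_relations:
  "word_coeff [D i, X j] \<gamma> + brsign pl p i j * word_coeff [X j, D i] \<gamma>
     = (if i = j then word_coeff [] \<gamma> else (0::'k::comm_ring_1))
   \<and> word_coeff [X i, X j] \<gamma> + brsign pl p i j * word_coeff [X j, X i] \<gamma> = 0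
   \<and> word_coeff [D i, D j] \<gamma> + brsign pl p i j * word_coeff [D j, D i] \<gamma> = 0"
proof (cases "occupation \<gamma>")
  case True
  note bounds = occupation_nonneg[OF True] occupation_fermionic[OF True]
  show ?thesis
  proof (cases i j rule: linorder_cases)
    case equal
    from True show ?thesis
      by (cases rule: occupation_cases[of _ j])
        (use True equal in \<open>simp_all add: fock_simps ring_distribs mult_ac fock_sign_square_left\<close>)
  qed (use True bounds in \<open>auto simp: fock_simps mult_ac brsign_square_left\<close>)
qed (simp add: word_coeff_non_occupation)

(* For f homogeneous of degree d, the coefficient of e_{\<gamma>+d} in f e_\<gamma>. *)
definition fock_coeff :: "'k::comm_ring_1 fa \<Rightarrow> (nat \<Rightarrow> int) \<Rightarrow> 'k" where
  "fock_coeff f \<gamma> = (\<Sum>w\<in>{w. f w \<noteq> 0}. f w * word_coeff w \<gamma>)"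

lemma fock_coeff_superset:
  "finite T \<Longrightarrow> {w. f w \<noteq> 0} \<subseteq> T \<Longrightarrow> fock_coeff f \<gamma> = (\<Sum>w\<in>T. f w * word_coeff w \<gamma>)"
  unfolding fock_coeff_def by (rule sum.mono_neutral_left) auto

lemma fock_coeff_add:
  assumes "fa_finite f" "fa_finite g"
  shows "fock_coeff (fa_add f g) \<gamma> = fock_coeff f \<gamma> + fock_coeff g \<gamma>"
proof -
  let ?T = "{w. f w \<noteq> 0} \<union> {w. g w \<noteq> 0}"
  have T: "finite ?T" using assms by (simp add: fa_finite_def)
  have "fock_coeff (fa_add f g) \<gamma> = (\<Sum>w\<in>?T. fa_add f g w * word_coeff w \<gamma>)"
    by (rule fock_coeff_superset[OF T]) (auto simp: fa_add_def)
  also have "\<dots> = fock_coeff f \<gamma> + fock_coeff g \<gamma>"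
    by (simp add: fock_coeff_superset[OF T] fa_add_def distrib_right sum.distrib)
  finally show ?thesis .
qed

lemma fock_coeff_diff:
  assumes "fa_finite f" "fa_finite g"
  shows "fock_coeff (fa_diff f g) \<gamma> = fock_coeff f \<gamma> - fock_coeff g \<gamma>"
proof -
  let ?T = "{w. f w \<noteq> 0} \<union> {w. g w \<noteq> 0}"
  have T: "finite ?T" using assms by (simp add: fa_finite_def)
  have "fock_coeff (fa_diff f g) \<gamma> = (\<Sum>w\<in>?T. fa_diff f g w * word_coeff w \<gamma>)"
    by (rule fock_coeff_superset[OF T]) (auto simp: fa_diff_def)
  also have "\<dots> = fock_coeff f \<gamma> - fock_coeff g \<gamma>"
    by (simp add: fock_coeff_superset[OF T] fa_diff_def left_diff_distrib sum_subtractf)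
  finally show ?thesis .
qed

lemma fock_coeff_smult:
  assumes "fa_finite f"
  shows "fock_coeff (fa_smult c f) \<gamma> = c * fock_coeff f \<gamma>"
proof -
  have T: "finite {w. f w \<noteq> 0}" using assms by (simp add: fa_finite_def)
  have "fock_coeff (fa_smult c f) \<gamma> = (\<Sum>w\<in>{w. f w \<noteq> 0}. fa_smult c f w * word_coeff w \<gamma>)"
    by (rule fock_coeff_superset[OF T]) (auto simp: fa_smult_def)
  also have "\<dots> = c * fock_coeff f \<gamma>"
    by (simp add: fock_coeff_def fa_smult_def sum_distrib_left mult.assoc)
  finally show ?thesis .
qed

lemma fock_coeff_mono: "fock_coeff (fa_mono u) \<gamma> = word_coeff u \<gamma>"
  by (subst fock_coeff_superset[of "{u}"]) (auto simp: fa_mono_def)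

lemma fock_coeff_zero: "fock_coeff (\<lambda>_. 0) \<gamma> = 0"
  by (simp add: fock_coeff_def)

lemma fock_coeff_mult:
  fixes f h :: "'k::comm_ring_1 fa"
  assumes ff: "fa_finite f" and fh: "fa_finite h" and hh: "fa_homog d h"
  shows "fock_coeff (fa_mult f h) \<gamma> = fock_coeff f (\<gamma> + d) * fock_coeff h \<gamma>"
proof -
  let ?P = "{x. f x \<noteq> 0} \<times> {y. h y \<noteq> 0}" and ?c = "\<lambda>(x, y). x @ y"
  have P: "finite ?P" using ff fh by (simp add: fa_finite_def)
  have "{w. fa_mult f h w \<noteq> 0} \<subseteq> ?c ` ?P"
  proof
    fix w assume "w \<in> {w. fa_mult f h w \<noteq> 0}"
    then obtain x y where "f x \<noteq> 0" "h y \<noteq> 0" "w = x @ y"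
      using fa_mult_nonzeroD[OF ff fh] by blast
    then show "w \<in> ?c ` ?P" by force
  qed
  with P have "fock_coeff (fa_mult f h) \<gamma> = (\<Sum>w\<in>?c ` ?P. fa_mult f h w * word_coeff w \<gamma>)"
    by (intro fock_coeff_superset) auto
  also have "\<dots> = (\<Sum>w\<in>?c ` ?P. \<Sum>z\<in>{z\<in>?P. ?c z = w}. (case z of (x, y) \<Rightarrow> f x * h y) * word_coeff (?c z) \<gamma>)"
    by (rule sum.cong[OF refl])
      (auto simp: fa_mult_pair_sum[OF P] sum_distrib_right split_def intro!: sum.cong)
  also have "\<dots> = (\<Sum>z\<in>?P. (case z of (x, y) \<Rightarrow> f x * h y) * word_coeff (?c z) \<gamma>)"
    by (rule sum.image_gen[symmetric, OF P])
  also have "\<dots> = (\<Sum>(x, y)\<in>?P. (f x * word_coeff x (\<gamma> + d)) * (h y * word_coeff y \<gamma>))"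
  proof (rule sum.cong[OF refl])
    fix z assume "z \<in> ?P"
    then obtain x y where z: "z = (x, y)" and "h y \<noteq> 0" by auto
    with hh have "word_deg y = d" by (simp add: fa_homog_def)
    then show "(case z of (x, y) \<Rightarrow> f x * h y) * word_coeff (?c z) \<gamma> =
        (case z of (x, y) \<Rightarrow> (f x * word_coeff x (\<gamma> + d)) * (h y * word_coeff y \<gamma>))"
      unfolding z by (simp add: word_coeff_append mult_ac)
  qed
  also have "\<dots> = fock_coeff f (\<gamma> + d) * fock_coeff h \<gamma>"
    by (simp add: fock_coeff_def sum_product sum.cartesian_product)
  finally show ?thesis .
qed

lemma fock_coeff_sandwich:
  assumes "fa_homog d r"
  shows "fock_coeff (sandwich u r v) \<gamma> =
    word_coeff u (\<gamma> + word_deg v + d) * word_coeff v \<gamma> * fock_coeff r (\<gamma> + word_deg v)"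
proof -
  have "inj (\<lambda>m. u @ m @ v)" by (auto intro: injI)
  then have "fock_coeff (sandwich u r v) \<gamma> = (\<Sum>m\<in>{m. r m \<noteq> 0}. r m * word_coeff (u @ m @ v) \<gamma>)"
    unfolding fock_coeff_def sandwich_support by (simp add: sum.reindex inj_on_subset)
  also have "\<dots> = (\<Sum>m\<in>{m. r m \<noteq> 0}.
      word_coeff u (\<gamma> + word_deg v + d) * word_coeff v \<gamma> * (r m * word_coeff m (\<gamma> + word_deg v)))"
    using assms by (intro sum.cong refl) (auto simp: fa_homog_def word_coeff_append add_ac mult_ac)
  also have "\<dots> = word_coeff u (\<gamma> + word_deg v + d) * word_coeff v \<gamma> * fock_coeff r (\<gamma> + word_deg v)"
    by (simp add: fock_coeff_def sum_distrib_left)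
  finally show ?thesis .
qed

lemma fock_coeff_bracket:
  "fock_coeff (bracket pl p a i b j) \<gamma> = word_coeff [a, b] \<gamma> + brsign pl p i j * word_coeff [b, a] \<gamma>"
  unfolding bracket_def by (simp add: fock_coeff_add fock_coeff_smult fock_coeff_mono fa_finite_smult fa_finite_mono)

lemma fock_coeff_rels: "r \<in> rels pl p q \<Longrightarrow> fock_coeff r \<gamma> = 0"
proof (induction rule: rels.induct)
  case (rel_DX i j)
  then show ?case
    using word_coeff_relations[of i j \<gamma>, THEN conjunct1]
    by (cases "i = j") (simp_all add: fock_coeff_diff fock_coeff_smult fock_coeff_mono fock_coeff_bracket fa_finite_bracket
        fa_finite_smult fa_finite_mono del: word_coeff.simps)
qed (simp_all add: fock_coeff_bracket word_coeff_relations del: word_coeff.simps)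

lemma fock_coeff_rel_ideal_deg_part:
  "f \<in> rel_ideal pl p q \<Longrightarrow> fa_finite f \<and> (\<forall>d. fock_coeff (deg_part d f) \<gamma> = 0)"
proof (induction arbitrary: \<gamma> rule: rel_ideal.induct)
  case ideal_zero
  then show ?case by (simp add: fa_finite_zero deg_part_def fock_coeff_zero)
next
  case (ideal_gen r c u v)
  obtain e where e: "fa_homog e r" using rels_homog[OF ideal_gen] by blast
  have fr: "fa_finite r" using rels_fa_finite[OF ideal_gen] .
  let ?S = "fa_smult c (sandwich u r v)"
  have hS: "fa_homog (word_deg u + e + word_deg v) ?S"
    using fa_homog_smult[OF fa_homog_sandwich[OF e]] .
  have fS: "fa_finite ?S" by (intro fa_finite_smult fa_finite_sandwich fr)
  have "fock_coeff (deg_part d ?S) \<gamma> = 0" for d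
  proof (cases "d = word_deg u + e + word_deg v")
    case True
    then show ?thesis
      using deg_part_homog[OF hS] fr
      by (simp add: fock_coeff_smult fa_finite_sandwich fock_coeff_sandwich[OF e] fock_coeff_rels[OF ideal_gen])
  next
    case False
    with hS have "deg_part d ?S = (\<lambda>_. 0)" by (auto simp: fa_homog_def deg_part_def fun_eq_iff)
    then show ?thesis by (simp add: fock_coeff_zero)
  qed
  with fS show ?case by (simp add: sandwich_def)
next
  case (ideal_add f g)
  then show ?case
    by (simp add: fa_finite_add deg_part_add fock_coeff_add fa_finite_deg_part)
qed

lemma fock_coeff_rel_ideal_homog:
  assumes "f \<in> rel_ideal pl p q" "fa_homog d f"
  shows "fock_coeff f \<gamma> = 0"
  using fock_coeff_rel_ideal_deg_part[OF assms(1)] deg_part_homog[OF assms(2)] by metis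

section \<open>The Fock form\<close>

definition fock_norm :: "(nat \<Rightarrow> int) \<Rightarrow> 'k::comm_ring_1" where
  "fock_norm \<alpha> = (\<Prod>j\<in>{j. \<alpha> j \<noteq> 0}. of_nat (fact (nat (\<alpha> j))))"

lemma fock_norm_superset:
  "finite S \<Longrightarrow> {j. \<alpha> j \<noteq> 0} \<subseteq> S \<Longrightarrow> fock_norm \<alpha> = (\<Prod>j\<in>S. of_nat (fact (nat (\<alpha> j))))"
  unfolding fock_norm_def by (rule prod.mono_neutral_left) auto

lemma fock_norm_Suc:
  assumes "finite {j. \<alpha> j \<noteq> 0}" "0 \<le> \<alpha> i"
  shows "fock_norm (\<alpha>(i := \<alpha> i + 1)) = (of_int (\<alpha> i) + 1) * (fock_norm \<alpha> :: 'k::comm_ring_1)"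
proof -
  let ?S = "insert i {j. \<alpha> j \<noteq> 0}" and ?fact = "\<lambda>j. of_nat (fact (nat (\<alpha> j))) :: 'k"
  have S: "finite ?S" using assms(1) by simp
  have "of_nat (fact (nat (\<alpha> i + 1))) = (of_int (\<alpha> i) + 1) * ?fact i"
    using assms(2) by (simp add: nat_add_distrib algebra_simps)
  moreover have "fock_norm (\<alpha>(i := \<alpha> i + 1)) = of_nat (fact (nat (\<alpha> i + 1))) * prod ?fact (?S - {i})"
  proof -
    have "fock_norm (\<alpha>(i := \<alpha> i + 1)) = (\<Prod>j\<in>?S. of_nat (fact (nat ((\<alpha>(i := \<alpha> i + 1)) j))) :: 'k)"
      by (rule fock_norm_superset[OF S]) auto
    also have "\<dots> = of_nat (fact (nat (\<alpha> i + 1))) * prod ?fact (?S - {i})"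
      using S by (subst prod.remove[of _ i]) (auto intro!: prod.cong)
    finally show ?thesis .
  qed
  moreover have "fock_norm \<alpha> = ?fact i * prod ?fact (?S - {i})"
  proof -
    have "fock_norm \<alpha> = prod ?fact ?S"
      by (rule fock_norm_superset[OF S]) auto
    then show ?thesis using assms(1) by (simp add: prod.insert_remove)
  qed
  ultimately show ?thesis by (simp add: mult.assoc)
qed

lemma fock_norm_nonzero: "fock_norm \<alpha> \<noteq> (0::'k::field_char_0)"
  by (cases "finite {j. \<alpha> j \<noteq> 0}") (simp_all add: fock_norm_def)

(* The factor \<alpha>_i + 1 by which x_i changes the norm is the factor \<partial>_i produces going back. *)
lemma gen_coeff_adjoint_X:
  "fock_norm \<gamma> * gen_coeff (D i) (\<gamma>(i := \<gamma> i + 1)) =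
     fock_norm (\<gamma>(i := \<gamma> i + 1)) * (gen_coeff (X i) \<gamma> :: 'k::comm_ring_1)"
proof (cases "occupation \<gamma>")
  case True
  then have "finite {j. \<gamma> j \<noteq> 0}" "0 \<le> \<gamma> i" by (simp_all add: occupation_def)
  then show ?thesis by (simp add: fock_norm_Suc fock_sign_upd_self mult_ac)
qed simp

lemma gen_coeff_adjoint:
  "fock_norm \<gamma> * gen_coeff (gswap a) (\<gamma> + gen_deg a) =
     fock_norm (\<gamma> + gen_deg a) * (gen_coeff a \<gamma> :: 'k::comm_ring_1)"
proof (cases a)
  case (X i)
  then show ?thesis using gen_coeff_adjoint_X[of \<gamma> i] by simp
next
  case (D i)
  let ?\<beta> = "\<gamma>(i := \<gamma> i - 1)"
  have "?\<beta>(i := ?\<beta> i + 1) = \<gamma>" "\<gamma> + gen_deg a = ?\<beta>"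
    using D by (simp_all add: fun_eq_iff)
  then show ?thesis
    using D gen_coeff_adjoint_X[of ?\<beta> i] by (metis gswap.simps(2))
qed

lemma word_coeff_adjoint:
  "fock_norm \<gamma> * word_coeff (star_word u) (\<gamma> + word_deg u) =
     fock_norm (\<gamma> + word_deg u) * (word_coeff u \<gamma> :: 'k::comm_ring_1)"
proof (induction u)
  case Nil
  then show ?case by (simp add: star_word_def)
next
  case (Cons a u)
  let ?\<beta> = "\<gamma> + word_deg u"
  have shift: "\<gamma> + word_deg (a # u) = ?\<beta> + gen_deg a" by (simp add: add_ac)
  have cancel: "?\<beta> + gen_deg a + gen_deg (gswap a) = ?\<beta>" by (simp add: fun_eq_iff)
  have "fock_norm \<gamma> * word_coeff (star_word (a # u)) (\<gamma> + word_deg (a # u))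
      = (fock_norm \<gamma> * word_coeff (star_word u) ?\<beta>) * (gen_coeff (gswap a) (?\<beta> + gen_deg a) :: 'k)"
    unfolding shift star_word_Cons word_coeff_append word_coeff_single cancel by (simp add: mult_ac)
  also have "\<dots> = word_coeff u \<gamma> * (fock_norm ?\<beta> * gen_coeff (gswap a) (?\<beta> + gen_deg a))"
    unfolding Cons.IH by (simp add: mult_ac)
  also have "\<dots> = fock_norm (\<gamma> + word_deg (a # u)) * word_coeff (a # u) \<gamma>"
    unfolding gen_coeff_adjoint shift by (simp add: mult_ac)
  finally show ?case .
qed

lemma fock_coeff_star_adjoint:
  fixes f :: "'k::comm_ring_1 fa"
  assumes "fa_finite f" "fa_homog d f"
  shows "fock_norm \<gamma> * fock_coeff (fa_star f) (\<gamma> + d) = fock_norm (\<gamma> + d) * fock_coeff f \<gamma>"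
proof -
  have "inj star_word" by (metis injI star_word_star_word)
  then have "fock_norm \<gamma> * fock_coeff (fa_star f) (\<gamma> + d) =
      (\<Sum>w\<in>{w. f w \<noteq> 0}. f w * (fock_norm \<gamma> * word_coeff (star_word w) (\<gamma> + d)))"
    unfolding fock_coeff_def fa_star_support
    by (simp add: sum.reindex inj_on_subset fa_star_apply sum_distrib_left mult_ac)
  also have "\<dots> = (\<Sum>w\<in>{w. f w \<noteq> 0}. f w * (fock_norm (\<gamma> + d) * word_coeff w \<gamma>))"
  proof (intro sum.cong refl)
    fix w assume "w \<in> {w. f w \<noteq> 0}"
    with assms(2) have "d = word_deg w" by (simp add: fa_homog_def)
    then show "f w * (fock_norm \<gamma> * word_coeff (star_word w) (\<gamma> + d)) =
        f w * (fock_norm (\<gamma> + d) * word_coeff w \<gamma>)"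
      by (simp add: word_coeff_adjoint)
  qed
  also have "\<dots> = fock_norm (\<gamma> + d) * fock_coeff f \<gamma>"
    by (simp add: fock_coeff_def sum_distrib_left mult_ac)
  finally show ?thesis .
qed

lemma fock_coeff_eq_0_if_star_mult_in_rel_ideal:
  fixes f :: "'k::field_char_0 fa"
  assumes fin: "fa_finite f" and hom: "fa_homog d f"
    and ideal: "fa_mult (fa_star f) f \<in> rel_ideal pl p q"
  shows "fock_coeff f \<gamma> = 0"
proof -
  have "fa_homog 0 (fa_mult (fa_star f) f)"
    using fa_homog_mult[OF fa_finite_star[OF fin] fin fa_homog_star[OF hom] hom] by simp
  with ideal have "fock_coeff (fa_mult (fa_star f) f) \<gamma> = 0"
    by (rule fock_coeff_rel_ideal_homog)
  then have "fock_coeff (fa_star f) (\<gamma> + d) * fock_coeff f \<gamma> = 0"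
    by (simp add: fock_coeff_mult[OF fa_finite_star[OF fin] fin hom])
  then have "fock_norm (\<gamma> + d) * (fock_coeff f \<gamma> * fock_coeff f \<gamma>) = 0"
    by (metis fock_coeff_star_adjoint[OF fin hom] mult.assoc mult_zero_right)
  then show ?thesis by (simp add: fock_norm_nonzero)
qed

end

section \<open>Normal words span the algebra\<close>

lemma gen_idx_simps [simp]: "gen_idx (X i) = i" "gen_idx (D i) = i"
  by (simp_all add: gen_idx_def)

fun gen_key :: "gen \<Rightarrow> nat \<times> nat" where
  "gen_key (X i) = (0, i)"
| "gen_key (D i) = (1, i)"

lemma inj_gen_key: "inj gen_key"
proof (rule injI)
  fix a b assume "gen_key a = gen_key b"
  then show "a = b" by (cases a; cases b) auto
qed

fun inversions :: "gen list \<Rightarrow> nat" where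
  "inversions [] = 0"
| "inversions (a # w) = length (filter (\<lambda>b. gen_key b < gen_key a) w) + inversions w"

lemma inversions_swap:
  "gen_key b < gen_key a \<Longrightarrow> inversions (u @ [b, a] @ v) < inversions (u @ [a, b] @ v)"
  by (induction u) auto

definition word_in_range :: "nat \<Rightarrow> gen list \<Rightarrow> bool" where
  "word_in_range n w \<longleftrightarrow> (\<forall>a\<in>set w. 1 \<le> gen_idx a \<and> gen_idx a \<le> n)"

context
  fixes pl :: bool and p :: nat
begin

(* PBW monomials: all x before all \<partial>, indices nondecreasing, no fermionic generator twice. *)
definition normal_word :: "gen list \<Rightarrow> bool" where
  "normal_word w \<longleftrightarrow> (\<forall>k. Suc k < length w \<longrightarrow>
     gen_key (w ! k) < gen_key (w ! Suc k) \<or> (w ! k = w ! Suc k \<and> \<not> fermionic pl p (gen_idx (w ! k))))"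

lemma not_normal_wordE:
  assumes "\<not> normal_word w"
  obtains u a b v where "w = u @ [a, b] @ v"
    and "gen_key b < gen_key a \<or> (a = b \<and> fermionic pl p (gen_idx a))"
proof -
  from assms obtain k where k: "Suc k < length w"
    and bad: "\<not> (gen_key (w ! k) < gen_key (w ! Suc k) \<or>
                 (w ! k = w ! Suc k \<and> \<not> fermionic pl p (gen_idx (w ! k))))"
    unfolding normal_word_def by blast
  have "w = take k w @ [w ! k, w ! Suc k] @ drop (Suc (Suc k)) w"
    using k by (metis Cons_nth_drop_Suc Suc_lessD append_Cons append_Nil append_take_drop_id)
  moreover have "gen_key (w ! Suc k) < gen_key (w ! k) \<or> (w ! k = w ! Suc k \<and> fermionic pl p (gen_idx (w ! k)))"
    using bad inj_gen_key by (metis injD not_less_iff_gr_or_eq)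
  ultimately show thesis using that by blast
qed

definition has_normal_form :: "nat \<Rightarrow> (nat \<Rightarrow> int) \<Rightarrow> 'k::comm_ring_1 fa \<Rightarrow> bool" where
  "has_normal_form q d f \<longleftrightarrow> (\<exists>g. fa_finite g \<and> (\<forall>w. g w \<noteq> 0 \<longrightarrow> normal_word w \<and> word_deg w = d)
      \<and> fa_diff f g \<in> rel_ideal pl p q)"

lemma has_normal_form_congruent:
  assumes "fa_diff f h \<in> rel_ideal pl p q" "has_normal_form q d h"
  shows "has_normal_form q d f"
proof -
  from assms(2) obtain g where g: "fa_finite g" "\<forall>w. g w \<noteq> 0 \<longrightarrow> normal_word w \<and> word_deg w = d"
    "fa_diff h g \<in> rel_ideal pl p q"
    unfolding has_normal_form_def by blast
  have "fa_diff f g = fa_add (fa_diff f h) (fa_diff h g)"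
    by (simp add: fa_diff_def fa_add_def fun_eq_iff)
  with rel_ideal.ideal_add[OF assms(1) g(3)] g(1,2) show ?thesis
    unfolding has_normal_form_def by auto
qed

lemma has_normal_form_add:
  assumes "has_normal_form q d f" "has_normal_form q d h"
  shows "has_normal_form q d (fa_add f h)"
proof -
  from assms obtain g1 g2
    where g1: "fa_finite g1" "\<forall>w. g1 w \<noteq> 0 \<longrightarrow> normal_word w \<and> word_deg w = d" "fa_diff f g1 \<in> rel_ideal pl p q"
      and g2: "fa_finite g2" "\<forall>w. g2 w \<noteq> 0 \<longrightarrow> normal_word w \<and> word_deg w = d" "fa_diff h g2 \<in> rel_ideal pl p q"
    unfolding has_normal_form_def by blast
  have "fa_diff (fa_add f h) (fa_add g1 g2) = fa_add (fa_diff f g1) (fa_diff h g2)"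
    by (simp add: fa_diff_def fa_add_def fun_eq_iff)
  then have "fa_diff (fa_add f h) (fa_add g1 g2) \<in> rel_ideal pl p q"
    using rel_ideal.ideal_add[OF g1(3) g2(3)] by simp
  moreover have "\<forall>w. fa_add g1 g2 w \<noteq> 0 \<longrightarrow> normal_word w \<and> word_deg w = d"
    using g1(2) g2(2) unfolding fa_add_def by (metis add.right_neutral)
  ultimately show ?thesis
    using fa_finite_add[OF g1(1) g2(1)] unfolding has_normal_form_def by blast
qed

lemma has_normal_form_smult:
  assumes "has_normal_form q d f"
  shows "has_normal_form q d (fa_smult c f)"
proof -
  from assms obtain g
    where g: "fa_finite g" "\<forall>w. g w \<noteq> 0 \<longrightarrow> normal_word w \<and> word_deg w = d" "fa_diff f g \<in> rel_ideal pl p q"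
    unfolding has_normal_form_def by blast
  have "fa_diff (fa_smult c f) (fa_smult c g) = fa_smult c (fa_diff f g)"
    by (simp add: fa_diff_def fa_smult_def fun_eq_iff right_diff_distrib)
  then have "fa_diff (fa_smult c f) (fa_smult c g) \<in> rel_ideal pl p q"
    using rel_ideal_smult[OF g(3)] by simp
  moreover have "\<forall>w. fa_smult c g w \<noteq> 0 \<longrightarrow> normal_word w \<and> word_deg w = d"
    using g(2) unfolding fa_smult_def by (metis mult_zero_right)
  ultimately show ?thesis
    using fa_finite_smult[OF g(1)] unfolding has_normal_form_def by blast
qed

lemma has_normal_form_zero: "has_normal_form q d (\<lambda>_. 0)"
  unfolding has_normal_form_def
  by (rule exI[of _ "\<lambda>_. 0"]) (simp add: fa_finite_zero fa_diff_def rel_ideal.ideal_zero)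

lemma has_normal_form_normal_word: "normal_word w \<Longrightarrow> has_normal_form q (word_deg w) (fa_mono w)"
  unfolding has_normal_form_def
  by (rule exI[of _ "fa_mono w"])
    (auto simp: fa_finite_mono fa_diff_def rel_ideal.ideal_zero, auto simp: fa_mono_def split: if_splits)

lemma has_normal_form_swap:
  fixes w w' :: "gen list" and s :: "'k::comm_ring_1"
  assumes "fa_add (fa_mono w) (fa_smult s (fa_mono w')) \<in> rel_ideal pl p q"
    and "has_normal_form q d (fa_mono w' :: 'k fa)"
  shows "has_normal_form q d (fa_mono w :: 'k fa)"
proof (rule has_normal_form_congruent)
  have "fa_diff (fa_mono w) (fa_smult (- s) (fa_mono w')) = (fa_add (fa_mono w) (fa_smult s (fa_mono w')) :: 'k fa)"
    by (simp add: fa_diff_def fa_add_def fa_smult_def fun_eq_iff)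
  with assms(1) show "fa_diff (fa_mono w) (fa_smult (- s) (fa_mono w')) \<in> rel_ideal pl p q" by simp
  show "has_normal_form q d (fa_smult (- s) (fa_mono w'))"
    using assms(2) by (rule has_normal_form_smult)
qed

lemma has_normal_form_swap_contract:
  fixes w w' w'' :: "gen list" and s c :: "'k::comm_ring_1"
  assumes "fa_diff (fa_add (fa_mono w) (fa_smult s (fa_mono w'))) (fa_smult c (fa_mono w'')) \<in> rel_ideal pl p q"
    and "has_normal_form q d (fa_mono w' :: 'k fa)"
    and "c \<noteq> 0 \<Longrightarrow> has_normal_form q d (fa_mono w'' :: 'k fa)"
  shows "has_normal_form q d (fa_mono w :: 'k fa)"
proof (rule has_normal_form_congruent)
  let ?h = "fa_add (fa_smult (- s) (fa_mono w')) (fa_smult c (fa_mono w''))"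
  have "fa_diff (fa_mono w) ?h =
      (fa_diff (fa_add (fa_mono w) (fa_smult s (fa_mono w'))) (fa_smult c (fa_mono w'')) :: 'k fa)"
    by (simp add: fa_diff_def fa_add_def fa_smult_def fun_eq_iff)
  with assms(1) show "fa_diff (fa_mono w) ?h \<in> rel_ideal pl p q" by simp
  have "has_normal_form q d (fa_smult c (fa_mono w'') :: 'k fa)"
  proof (cases "c = 0")
    case True
    then have "fa_smult c (fa_mono w'') = (\<lambda>_. 0 :: 'k)" by (simp add: fa_smult_def fun_eq_iff)
    then show ?thesis by (simp add: has_normal_form_zero)
  qed (use assms(3) has_normal_form_smult in blast)
  then show "has_normal_form q d ?h"
    using has_normal_form_add has_normal_form_smult[OF assms(2)] by blast
qed

lemma has_normal_form_square_zero:
  assumes "fa_add (fa_mono w) (fa_smult 1 (fa_mono w)) \<in> (rel_ideal pl p q :: 'k::field_char_0 fa set)"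
  shows "has_normal_form q d (fa_mono w :: 'k fa)"
proof (rule has_normal_form_congruent)
  have "fa_diff (fa_mono w) (\<lambda>_. 0) = fa_smult (1 / 2) (fa_add (fa_mono w) (fa_smult 1 (fa_mono w)) :: 'k fa)"
    by (simp add: fa_diff_def fa_add_def fa_smult_def fun_eq_iff fa_mono_def)
  then show "fa_diff (fa_mono w) (\<lambda>_. 0) \<in> (rel_ideal pl p q :: 'k fa set)"
    using rel_ideal_smult[OF assms, of "1 / 2"] by metis
qed (rule has_normal_form_zero)

lemma has_normal_form_reorder:
  fixes u v :: "gen list"
  assumes rel: "fa_add (fa_mono (u @ [a, b] @ v))
      (fa_smult (brsign pl p (gen_idx a) (gen_idx b)) (fa_mono (u @ [b, a] @ v)))
      \<in> (rel_ideal pl p q :: 'k::field_char_0 fa set)"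
    and bad: "gen_key b < gen_key a \<or> (a = b \<and> fermionic pl p (gen_idx a))"
    and swapped: "gen_key b < gen_key a \<Longrightarrow> has_normal_form q d (fa_mono (u @ [b, a] @ v) :: 'k fa)"
  shows "has_normal_form q d (fa_mono (u @ [a, b] @ v) :: 'k fa)"
proof (cases "gen_key b < gen_key a")
  case True
  with rel swapped show ?thesis by (metis has_normal_form_swap)
next
  case False
  with bad have "b = a" "fermionic pl p (gen_idx a)" by auto
  with rel show ?thesis by (simp add: brsign_diag has_normal_form_square_zero)
qed

lemma has_normal_form_contract:
  fixes u v :: "gen list"
  assumes idx: "1 \<le> i" "i \<le> p + q" "1 \<le> j" "j \<le> p + q"
    and swapped: "has_normal_form q d (fa_mono (u @ [X j, D i] @ v) :: 'k fa)"
    and contracted: "has_normal_form q (word_deg (u @ v)) (fa_mono (u @ v) :: 'k::field_char_0 fa)"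
    and deg: "word_deg (u @ [D i, X j] @ v) = d"
  shows "has_normal_form q d (fa_mono (u @ [D i, X j] @ v) :: 'k fa)"
proof -
  have "word_deg (u @ [D i, X i] @ v) = word_deg (u @ v)"
    unfolding word_deg_def by (simp add: fun_eq_iff)
  with deg have "i = j \<Longrightarrow> word_deg (u @ v) = d" by simp
  with contracted have "(if i = j then 1 else 0) \<noteq> (0::'k) \<Longrightarrow> has_normal_form q d (fa_mono (u @ v) :: 'k fa)"
    by (cases "i = j") simp_all
  moreover have "fa_diff (fa_add (fa_mono (u @ [D i, X j] @ v))
        (fa_smult (brsign pl p i j) (fa_mono (u @ [X j, D i] @ v))))
      (fa_smult (if i = j then 1 else 0) (fa_mono (u @ v)) :: 'k fa) \<in> rel_ideal pl p q"
    using idx by (rule swap_DX_in_rel_ideal)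
  ultimately show ?thesis
    using has_normal_form_swap_contract swapped by blast
qed

lemma has_normal_form_adjacent_pair:
  fixes u v :: "gen list"
  assumes range: "word_in_range (p + q) (u @ [a, b] @ v)"
    and bad: "gen_key b < gen_key a \<or> (a = b \<and> fermionic pl p (gen_idx a))"
    and swapped: "gen_key b < gen_key a \<Longrightarrow> has_normal_form q d (fa_mono (u @ [b, a] @ v) :: 'k fa)"
    and contracted: "has_normal_form q (word_deg (u @ v)) (fa_mono (u @ v) :: 'k::field_char_0 fa)"
    and deg: "word_deg (u @ [a, b] @ v) = d"
  shows "has_normal_form q d (fa_mono (u @ [a, b] @ v) :: 'k fa)"
proof -
  have idx: "1 \<le> gen_idx a" "gen_idx a \<le> p + q" "1 \<le> gen_idx b" "gen_idx b \<le> p + q"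
    using range by (auto simp: word_in_range_def)
  show ?thesis
  proof (cases a; cases b)
    fix i j assume ab: "a = X i" "b = X j"
    have "fa_add (fa_mono (u @ [a, b] @ v))
        (fa_smult (brsign pl p (gen_idx a) (gen_idx b)) (fa_mono (u @ [b, a] @ v)))
        \<in> (rel_ideal pl p q :: 'k fa set)"
      unfolding ab gen_idx_simps by (rule swap_XX_in_rel_ideal) (use idx ab in simp_all)
    from this bad swapped show ?thesis by (rule has_normal_form_reorder)
  next
    fix i j assume ab: "a = D i" "b = D j"
    have "fa_add (fa_mono (u @ [a, b] @ v))
        (fa_smult (brsign pl p (gen_idx a) (gen_idx b)) (fa_mono (u @ [b, a] @ v)))
        \<in> (rel_ideal pl p q :: 'k fa set)"
      unfolding ab gen_idx_simps by (rule swap_DD_in_rel_ideal) (use idx ab in simp_all)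
    from this bad swapped show ?thesis by (rule has_normal_form_reorder)
  next
    fix i j assume ab: "a = D i" "b = X j"
    show ?thesis
      unfolding ab by (rule has_normal_form_contract) (use idx swapped contracted deg ab in simp_all)
  next
    fix i j assume "a = X i" "b = D j"
    with bad show ?thesis by simp
  qed
qed

lemma has_normal_form_word:
  "word_in_range (p + q) w \<Longrightarrow> has_normal_form q (word_deg w) (fa_mono w :: 'k::field_char_0 fa)"
proof (induction w rule: wf_induct[OF wf_measures[of "[length, inversions]"]])
  case (1 w)
  show ?case
  proof (cases "normal_word w")
    case True
    then show ?thesis by (rule has_normal_form_normal_word)
  next
    case False
    then obtain u a b v where w: "w = u @ [a, b] @ v"
      and bad: "gen_key b < gen_key a \<or> (a = b \<and> fermionic pl p (gen_idx a))"
      by (rule not_normal_wordE)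
    have ranges: "word_in_range (p + q) (u @ [b, a] @ v)" "word_in_range (p + q) (u @ v)"
      using "1.prems" unfolding w by (auto simp: word_in_range_def)
    show ?thesis
      unfolding w
    proof (rule has_normal_form_adjacent_pair[OF "1.prems"[unfolded w] bad])
      assume "gen_key b < gen_key a"
      then have "(u @ [b, a] @ v, w) \<in> measures [length, inversions]"
        using inversions_swap unfolding w by simp
      moreover have "word_deg (u @ [b, a] @ v) = word_deg (u @ [a, b] @ v)"
        by (simp add: add_ac)
      ultimately show "has_normal_form q (word_deg (u @ [a, b] @ v)) (fa_mono (u @ [b, a] @ v) :: 'k fa)"
        using "1.IH" ranges(1) by metis
    next
      have "(u @ v, w) \<in> measures [length, inversions]"
        unfolding w by simp
      then show "has_normal_form q (word_deg (u @ v)) (fa_mono (u @ v) :: 'k fa)"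
        using "1.IH" ranges(2) by blast
    qed (simp add: fun_eq_iff)
  qed
qed

lemma has_normal_form_homog:
  fixes f :: "'k::field_char_0 fa"
  assumes fin: "fa_finite f" and range: "fa_in_range (p + q) f" and hom: "fa_homog d f"
  shows "has_normal_form q d f"
proof -
  have "has_normal_form q d (\<lambda>w. if w \<in> T then f w else 0)"
    if "finite T" "T \<subseteq> {w. f w \<noteq> 0}" for T
    using that
  proof (induction T rule: finite_induct)
    case empty
    then show ?case by (simp add: has_normal_form_zero)
  next
    case (insert x T)
    then have "f x \<noteq> 0" by auto
    with hom range have "word_deg x = d" "word_in_range (p + q) x"
      by (simp_all add: fa_homog_def fa_in_range_def word_in_range_def)
    then have "has_normal_form q d (fa_mono x :: 'k fa)"
      using has_normal_form_word by metis
    moreover have "(\<lambda>w. if w \<in> insert x T then f w else 0) =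
        fa_add (fa_smult (f x) (fa_mono x)) (\<lambda>w. if w \<in> T then f w else 0)"
      using insert(2) by (auto simp: fun_eq_iff fa_add_def fa_smult_def fa_mono_def)
    ultimately show ?case
      using insert by (auto intro: has_normal_form_add has_normal_form_smult)
  qed
  moreover have "(\<lambda>w. if w \<in> {w. f w \<noteq> 0} then f w else 0) = f" by (auto simp: fun_eq_iff)
  ultimately show ?thesis using fin unfolding fa_finite_def by (metis order_refl)
qed

end

section \<open>Normal words act independently\<close>

fun is_D :: "gen \<Rightarrow> bool" where
  "is_D (X i) = False"
| "is_D (D i) = True"

lemma sorted_gen_key_split:
  "sorted (map gen_key w) \<Longrightarrow> w = filter (\<lambda>a. \<not> is_D a) w @ filter is_D w"
proof (induction w)
  case (Cons a w)
  then have "sorted (map gen_key w)" and le: "\<forall>x\<in>set w. gen_key a \<le> gen_key x" by auto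
  moreover have "\<forall>x\<in>set w. is_D x" if "is_D a"
  proof
    fix x assume "x \<in> set w"
    with le that show "is_D x" by (cases a; cases x) auto
  qed
  ultimately show ?case using Cons.IH by (cases a) auto
qed simp

lemma word_deg_count: "word_deg w j = int (count (mset w) (X j)) - int (count (mset w) (D j))"
proof -
  have "filter ((=) c) w = filter (\<lambda>a. a = c) w" for c
    by (induction w) auto
  then show ?thesis
    unfolding word_deg_def count_mset count_list_eq_length_filter by simp
qed

definition D_count :: "gen list \<Rightarrow> nat \<Rightarrow> int" where
  "D_count w = (\<lambda>j. int (count (mset w) (D j)))"

context
  fixes pl :: bool and p :: nat
begin

lemma normal_word_sorted: "normal_word pl p w \<Longrightarrow> sorted (map gen_key w)"
  unfolding normal_word_def sorted_iff_nth_Suc by (auto simp: less_imp_le)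

lemma normal_word_Cons: "normal_word pl p (a # w) \<Longrightarrow> normal_word pl p w"
  unfolding normal_word_def by (metis Suc_less_eq length_Cons nth_Cons_Suc)

lemma normal_word_fermionic_notin:
  assumes n: "normal_word pl p (a # w)" and c: "fermionic pl p (gen_idx a)"
  shows "a \<notin> set w"
proof
  assume "a \<in> set w"
  then obtain m where m: "m < length w" "w ! m = a" by (auto simp: in_set_conv_nth)
  have s: "sorted (map gen_key (a # w))" using normal_word_sorted[OF n] .
  have nonempty: "0 < length w" using m(1) by linarith
  then have "w ! 0 \<in> set w" by (rule nth_mem)
  with s have "gen_key a \<le> gen_key (w ! 0)" by simp
  moreover have "gen_key (w ! 0) \<le> gen_key (w ! m)"
    using sorted_nth_mono[of "map gen_key w" 0 m] s m(1) nonempty by simp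
  ultimately have "gen_key (w ! 0) = gen_key a" using m by auto
  then have "w ! 0 = a" using inj_gen_key by (simp add: inj_eq)
  moreover have "gen_key ((a # w) ! 0) < gen_key ((a # w) ! Suc 0) \<or>
      ((a # w) ! 0 = (a # w) ! Suc 0 \<and> \<not> fermionic pl p (gen_idx ((a # w) ! 0)))"
    using n nonempty unfolding normal_word_def by (metis length_Cons Suc_less_eq)
  ultimately show False using c by auto
qed

lemma normal_word_count_fermionic:
  "normal_word pl p w \<Longrightarrow> fermionic pl p (gen_idx c) \<Longrightarrow> count (mset w) c \<le> 1"
proof (induction w)
  case (Cons a w)
  then show ?case
    using normal_word_fermionic_notin[OF Cons.prems(1)] normal_word_Cons[OF Cons.prems(1)]
    by (cases "a = c") (auto simp: count_eq_zero_iff)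
qed simp

lemma gen_coeff_nonzero:
  assumes "occupation pl p \<alpha>" "occupation pl p (\<alpha> + gen_deg a)"
  shows "gen_coeff pl p a \<alpha> \<noteq> (0::'k::field_char_0)"
proof -
  have sign: "fock_sign pl p i \<alpha> \<noteq> (0::'k)" for i
    by (metis fock_sign_square mult_zero_left zero_neq_one)
  show ?thesis
  proof (cases a)
    case (D i)
    with assms have "0 \<le> \<alpha> i - 1" using occupation_nonneg[of pl p "\<alpha>(i := \<alpha> i - 1)" i] by simp
    with D assms sign show ?thesis by simp
  qed (use assms sign in simp)
qed

lemma word_coeff_nonzero:
  "(\<And>k. k \<le> length w \<Longrightarrow> occupation pl p (\<gamma> + word_deg (drop k w))) \<Longrightarrow>
    word_coeff pl p w \<gamma> \<noteq> (0::'k::field_char_0)"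
proof (induction w)
  case (Cons a w)
  have "word_coeff pl p w \<gamma> \<noteq> (0::'k)"
    by (rule Cons.IH) (use Cons.prems[of "Suc _"] in auto)
  moreover have "occupation pl p (\<gamma> + word_deg w)" "occupation pl p (\<gamma> + word_deg w + gen_deg a)"
    using Cons.prems[of 1] Cons.prems[of 0] by (simp_all add: add_ac plus_fun_def)
  ultimately show ?case
    using gen_coeff_nonzero by (simp del: gen_coeff.simps)
qed simp

lemma occupation_D_count_suffix:
  assumes n: "normal_word pl p w"
  shows "occupation pl p (D_count w + word_deg (drop k w))"
proof -
  let ?pre = "take k w" and ?suf = "drop k w"
  let ?\<alpha> = "\<lambda>j. int (count (mset ?suf) (X j)) + int (count (mset ?pre) (D j))"
  have mw: "mset w = mset ?pre + mset ?suf" by (metis append_take_drop_id mset_append)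
  have eq: "D_count w + word_deg ?suf = ?\<alpha>"
    by (simp add: fun_eq_iff D_count_def word_deg_count mw)
  have "sorted (map gen_key ?pre @ map gen_key ?suf)"
    using normal_word_sorted[OF n] by (simp flip: map_append)
  then have keys: "\<forall>x\<in>set ?pre. \<forall>y\<in>set ?suf. gen_key x \<le> gen_key y"
    by (simp add: sorted_append)
  have "?\<alpha> j \<le> 1" if c: "fermionic pl p j" for j
  proof (cases "X j \<in> set ?suf")
    case True
    have "D j \<notin> set ?pre"
    proof
      assume "D j \<in> set ?pre"
      with keys True have "gen_key (D j) \<le> gen_key (X j)" by blast
      then show False by simp
    qed
    moreover have "count (mset ?suf) (X j) \<le> 1"
      using normal_word_count_fermionic[OF n, of "X j"] c by (simp add: mw)
    ultimately show ?thesis by (simp add: count_mset_0_iff[THEN iffD2])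
  next
    case False
    moreover have "count (mset ?pre) (D j) \<le> 1"
      using normal_word_count_fermionic[OF n, of "D j"] c by (simp add: mw)
    ultimately show ?thesis by (simp add: count_mset_0_iff[THEN iffD2])
  qed
  moreover have "{j. ?\<alpha> j \<noteq> 0} \<subseteq> gen_idx ` set w"
  proof
    fix j assume "j \<in> {j. ?\<alpha> j \<noteq> 0}"
    moreover have "?\<alpha> j = 0" if "X j \<notin> set ?suf" "D j \<notin> set ?pre"
      using that by (simp add: count_mset_0_iff[THEN iffD2])
    ultimately have "X j \<in> set ?suf \<or> D j \<in> set ?pre" by auto
    then have "X j \<in> set w \<or> D j \<in> set w" by (meson in_set_dropD in_set_takeD)
    then show "j \<in> gen_idx ` set w" by (metis gen_idx_simps image_eqI)
  qed
  then have "finite {j. ?\<alpha> j \<noteq> 0}" by (rule finite_subset) simp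
  ultimately show ?thesis unfolding eq occupation_def by simp
qed

lemma word_coeff_normal_nonzero:
  "normal_word pl p w \<Longrightarrow> word_coeff pl p w (D_count w) \<noteq> (0::'k::field_char_0)"
  by (rule word_coeff_nonzero) (rule occupation_D_count_suffix)

lemma normal_word_unique:
  assumes n: "normal_word pl p w" and n0: "normal_word pl p w0" and deg: "word_deg w = word_deg w0"
    and fewer: "length (filter is_D w0) \<le> length (filter is_D w)"
    and nz: "word_coeff pl p w (D_count w0) \<noteq> (0::'k::field_char_0)"
  shows "w = w0"
proof -
  let ?xs = "filter (\<lambda>a. \<not> is_D a) w" and ?ds = "filter is_D w"
  have "word_coeff pl p w (D_count w0) = word_coeff pl p ?xs (D_count w0 + word_deg ?ds) * (word_coeff pl p ?ds (D_count w0) :: 'k)"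
    by (subst sorted_gen_key_split[OF normal_word_sorted[OF n]]) (rule word_coeff_append)
  with nz have occ: "occupation pl p (D_count w0 + word_deg ?ds)"
    using word_coeff_nonzeroD by (metis mult_zero_left)
  have "count (mset ?ds) (X j) = 0" "count (mset ?ds) (D j) = count (mset w) (D j)" for j
    by simp_all
  then have "count (mset w) (D j) \<le> count (mset w0) (D j)" for j
    using occupation_nonneg[OF occ, of j] by (simp add: word_deg_count D_count_def)
  then have "filter_mset is_D (mset w) \<subseteq># filter_mset is_D (mset w0)"
    unfolding subseteq_mset_def by (metis count_filter_mset is_D.elims(2) order_refl)
  moreover have "size (filter_mset is_D (mset w0)) \<le> size (filter_mset is_D (mset w))"
    using fewer by (simp flip: mset_filter)
  ultimately have "filter_mset is_D (mset w) = filter_mset is_D (mset w0)"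
    by (metis leD mset_subset_size subset_mset.le_imp_less_or_eq)
  then have eqD: "count (mset w) (D j) = count (mset w0) (D j)" for j
    by (metis count_filter_mset is_D.simps(2))
  have eqX: "count (mset w) (X j) = count (mset w0) (X j)" for j
    using fun_cong[OF deg, of j] by (simp add: word_deg_count eqD)
  have "mset w = mset w0"
    by (rule multiset_eqI) (metis eqD eqX gen.exhaust)
  then have "sort (map gen_key w0) = map gen_key w"
    by (intro properties_for_sort normal_word_sorted[OF n]) simp
  then have "map gen_key w = map gen_key w0"
    using sorted_sort_id[OF normal_word_sorted[OF n0]] by simp
  then show ?thesis using inj_gen_key by simp
qed

(* Evaluate at e_\<beta>, \<beta> the \<partial>-multiplicities of a normal word w0 of the support with fewest
   \<partial>'s: w0 sends e_\<beta> to a nonzero multiple of e_{\<beta>+d}, every other normal word of degree d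
   kills it. *)
lemma normal_combination_eq_0:
  fixes g :: "'k::field_char_0 fa"
  assumes fin: "fa_finite g" and normal: "\<forall>w. g w \<noteq> 0 \<longrightarrow> normal_word pl p w \<and> word_deg w = d"
    and annihilates: "\<And>\<gamma>. fock_coeff pl p g \<gamma> = 0"
  shows "g = (\<lambda>_. 0)"
proof (rule ccontr)
  let ?S = "{w. g w \<noteq> 0}"
  assume "g \<noteq> (\<lambda>_. 0)"
  then obtain w1 where "w1 \<in> ?S" by auto
  then obtain w0 where w0: "w0 \<in> ?S"
    and least: "\<And>w. w \<in> ?S \<Longrightarrow> length (filter is_D w0) \<le> length (filter is_D w)"
    using ex_has_least_nat[of "\<lambda>w. w \<in> ?S" w1 "\<lambda>w. length (filter is_D w)"] by blast
  have n0: "normal_word pl p w0" and d0: "word_deg w0 = d" using w0 normal by auto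
  have others: "word_coeff pl p w (D_count w0) = (0::'k)" if "w \<in> ?S - {w0}" for w
    using that normal d0 least normal_word_unique[OF _ n0] by blast
  have "fock_coeff pl p g (D_count w0) = g w0 * word_coeff pl p w0 (D_count w0) +
      (\<Sum>w\<in>?S - {w0}. g w * word_coeff pl p w (D_count w0))"
    unfolding fock_coeff_def using fin w0 by (simp add: fa_finite_def sum.remove)
  also have "(\<Sum>w\<in>?S - {w0}. g w * word_coeff pl p w (D_count w0)) = 0"
    using others by simp
  finally have "fock_coeff pl p g (D_count w0) \<noteq> 0"
    using w0 word_coeff_normal_nonzero[OF n0] by simp
  with annihilates show False by blast
qed

end

theorem mainTheorem2:
  fixes pl :: bool and p q :: nat and g :: "nat \<Rightarrow> int" and a :: "'k::field_char_0 fa"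
  assumes "alg_closed TYPE('k)"
    and "fa_finite a" and "fa_in_range (p + q) a"
    and "fa_homog g a"
    and "fa_mult (fa_star a) a \<in> rel_ideal pl p q"
  shows "a \<in> rel_ideal pl p q"
proof -
  note fin = assms(2) and hom = assms(4)
  obtain h where fin_h: "fa_finite h" and normal: "\<forall>w. h w \<noteq> 0 \<longrightarrow> normal_word pl p w \<and> word_deg w = g"
    and diff: "fa_diff a h \<in> rel_ideal pl p q"
    using has_normal_form_homog[OF fin assms(3) hom, of pl] unfolding has_normal_form_def by blast
  have "fa_homog g (fa_diff a h)"
    using hom normal by (intro fa_homog_diff) (simp_all add: fa_homog_def)
  then have "fock_coeff pl p h \<gamma> = 0" for \<gamma>
    using fock_coeff_eq_0_if_star_mult_in_rel_ideal[OF fin hom assms(5)]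
      fock_coeff_rel_ideal_homog[OF diff] by (simp add: fock_coeff_diff[OF fin fin_h])
  then have "h = (\<lambda>_. 0)"
    by (rule normal_combination_eq_0[OF fin_h normal])
  with diff show ?thesis by (simp add: fa_diff_def)
qed

end
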